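(* Let $p\geq 1$, let $\Omega$ be a set with the discrete topology, and let $\varphi=(\varphi_j)_{j\in\Omega}$ be a family of real numbers with $\varphi_j\geq 1$ for all $j\in\Omega$. Let $\mu_\varphi:=\sum_{j\in\Omega}\varphi_j\,\delta_j$, where $\delta_j$ is the point-mass measure at $j$. Then for each $g\in L^p(\Omega,\mu_\varphi)$, the set $$\Gamma_g:=\big\{f\in L^p(\Omega,\mu_\varphi):\ |f|\geq |g|\big\}$$ is not $\sigma$-porous in $L^p(\Omega,\mu_\varphi)$.
   Context: Porosity: Let $X$ be a metric space and $0<\lambda<1$. A set $E\subseteq X$ is $\lambda$-porous at $x\in E$ if for each $\delta>0$ there is $y\in B(x;\delta)\setminus\{x\}$ with $B(y;\lambda\, d(x,y))\cap E=\varnothing$; $E$ is $\lambda$-porous if it is $\lambda$-porous at each of its points; $E$ is $\sigma$-$\lambda$-porous if it is a countable union of $\lambda$-porous subsets of $X$. A set is called $\sigma$-porous if it is $\sigma$-$\lambda$-porous for some $\lambda\in(0,1)$; "not $\sigma$-porous" means not $\sigma$-$\lambda$-porous for any $\lambda\in(0,1)$. *)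

theory Defs
  imports "HOL-Analysis.Analysis"
begin

definition porous_at :: "'b set \<Rightarrow> ('b \<Rightarrow> 'b \<Rightarrow> real) \<Rightarrow> real \<Rightarrow> 'b set \<Rightarrow> 'b \<Rightarrow> bool" where
  "porous_at X d lam E x \<longleftrightarrow>
     (\<forall>\<delta>>0. \<exists>y\<in>X. d x y < \<delta> \<and> y \<noteq> x \<and>
        (\<forall>z\<in>X. d y z < lam * d x y \<longrightarrow> z \<notin> E))"

definition porous :: "'b set \<Rightarrow> ('b \<Rightarrow> 'b \<Rightarrow> real) \<Rightarrow> real \<Rightarrow> 'b set \<Rightarrow> bool" where
  "porous X d lam E \<longleftrightarrow> E \<subseteq> X \<and> (\<forall>x\<in>E. porous_at X d lam E x)"

definition sigma_porous :: "'b set \<Rightarrow> ('b \<Rightarrow> 'b \<Rightarrow> real) \<Rightarrow> real \<Rightarrow> 'b set \<Rightarrow> bool" where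
  "sigma_porous X d lam E \<longleftrightarrow>
     (\<exists>A :: nat \<Rightarrow> 'b set. E = (\<Union>n. A n) \<and> (\<forall>n. porous X d lam (A n)))"

text \<open>L^p(Omega, mu_phi) with mu_phi = sum of phi_j delta_j (discrete space, each point has
  positive mass, so a.e.-classes are just functions on Omega; we represent them as
  real functions vanishing outside Omega).\<close>

definition lp_space :: "'a set \<Rightarrow> ('a \<Rightarrow> real) \<Rightarrow> real \<Rightarrow> ('a \<Rightarrow> real) set" where
  "lp_space \<Omega> \<phi> p = {f. (\<forall>j. j \<notin> \<Omega> \<longrightarrow> f j = 0) \<and>
                          (\<lambda>j. \<phi> j * \<bar>f j\<bar> powr p) summable_on \<Omega>}"

definition lp_dist :: "'a set \<Rightarrow> ('a \<Rightarrow> real) \<Rightarrow> real \<Rightarrow> ('a \<Rightarrow> real) \<Rightarrow> ('a \<Rightarrow> real) \<Rightarrow> real" where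
  "lp_dist \<Omega> \<phi> p f g = (infsum (\<lambda>j. \<phi> j * \<bar>f j - g j\<bar> powr p) \<Omega>) powr (1 / p)"

end

theory Submission
  imports Defs
begin

text \<open>Given a ball centred in \<open>dominating h\<close> and a porous set \<open>A\<close>,
  one can raise the threshold and shrink the ball so that its trace on the smaller set
  \<open>dominating h'\<close> misses \<open>A\<close>: first push the centre slightly upwards, so that nearby points
  of \<open>A\<close> are far above \<open>h\<close>; a hole of \<open>A\<close> next to such a point can then be projected back onto
  \<open>dominating h\<close> at a cost that is a small fraction of its radius. Iterating this against the
  pieces \<open>A\<^sub>n\<close> of a putative \<open>\<sigma>\<close>-porous decomposition of \<open>dominating \<bar>g\<bar>\<close> produces nested
  balls; by completeness of \<open>L\<^sup>p\<close> they have a common point, which lies in \<open>dominating \<bar>g\<bar>\<close>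
  because each \<open>dominating h\<close> is closed under pointwise limits, but in no \<open>A\<^sub>n\<close>.\<close>

lemma abs_add_powr_le:
  fixes a b p :: real
  assumes "0 \<le> p"
  shows "\<bar>a + b\<bar> powr p \<le> 2 powr p * (\<bar>a\<bar> powr p + \<bar>b\<bar> powr p)"
proof -
  define M where "M = max \<bar>a\<bar> \<bar>b\<bar>"
  have "\<bar>a + b\<bar> powr p \<le> (2 * M) powr p"
    unfolding M_def by (intro powr_mono2) (use assms in auto)
  also have "\<dots> = 2 powr p * M powr p" by (subst powr_mult) (auto simp: M_def)
  also have "M powr p \<le> \<bar>a\<bar> powr p + \<bar>b\<bar> powr p"
    unfolding M_def by (cases "\<bar>a\<bar> \<le> \<bar>b\<bar>") (auto simp: max_def)
  finally show ?thesis by simp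
qed

text \<open>\<open>raise t s\<close> is the point nearest to \<open>t\<close> (on the same side of \<open>0\<close>) whose modulus is at
  least \<open>s\<close>.\<close>

definition raise :: "real \<Rightarrow> real \<Rightarrow> real" where
  "raise t s = (if 0 \<le> t then max t s else min t (- s))"

lemma abs_raise: "0 \<le> s \<Longrightarrow> \<bar>raise t s\<bar> = max \<bar>t\<bar> s"
  unfolding raise_def by auto

lemma abs_raise_diff: "0 \<le> s \<Longrightarrow> \<bar>raise t s - t\<bar> = max 0 (s - \<bar>t\<bar>)"
  unfolding raise_def by auto

lemma abs_raise_diff_le_scaled:
  fixes h m th x y :: real
  assumes "0 \<le> h" "0 \<le> th" "th \<le> 1" "\<bar>x - y\<bar> < m"
    and "h + m \<le> \<bar>x\<bar> \<or> h \<le> th * \<bar>x\<bar>"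
  shows "\<bar>raise y h - y\<bar> \<le> th * \<bar>x - y\<bar>"
proof (cases "h \<le> \<bar>y\<bar>")
  case True
  then show ?thesis using assms(1,2) by (simp add: abs_raise_diff)
next
  case False
  have "\<bar>x\<bar> \<le> \<bar>x - y\<bar> + \<bar>y\<bar>" by linarith
  then have "h \<le> th * \<bar>x\<bar>" using False assms(4,5) by linarith
  also have "\<dots> \<le> th * (\<bar>x - y\<bar> + \<bar>y\<bar>)"
    using \<open>\<bar>x\<bar> \<le> _\<close> assms(2) by (intro mult_left_mono)
  also have "\<dots> \<le> th * \<bar>x - y\<bar> + \<bar>y\<bar>"
    using assms(2,3) by (simp add: distrib_left mult_left_le_one_le)
  finally have "h \<le> th * \<bar>x - y\<bar> + \<bar>y\<bar>" .
  moreover have "0 \<le> th * \<bar>x - y\<bar>" using assms(2) by simp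
  ultimately show ?thesis using assms(1) by (simp add: abs_raise_diff)
qed

lemma summable_on_of_cofinite:
  fixes f :: "'a \<Rightarrow> real"
  assumes "finite H" "f summable_on (A - H)"
  shows "f summable_on A"
proof -
  have "f summable_on (H \<union> (A - H))" using assms by (intro summable_on_union) auto
  then show ?thesis by (rule summable_on_subset) auto
qed

lemma infsum_tail_small:
  fixes f :: "'a \<Rightarrow> real"
  assumes "f summable_on A" "0 < e"
  obtains H where "finite H" "H \<subseteq> A" "infsum f (A - H) \<le> e"
proof -
  obtain H where H: "finite H" "H \<subseteq> A" "dist (sum f H) (infsum f A) \<le> e"
    using infsum_finite_approximation[OF assms] by blast
  have "infsum f (A - H) = infsum f A - sum f H"
    using H assms(1) by (subst infsum_Diff) auto
  then show ?thesis using H that by (auto simp: dist_real_def)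
qed

locale weighted_lp =
  fixes \<Omega> :: "'a set" and \<phi> :: "'a \<Rightarrow> real" and p :: real
  assumes one_le_p: "1 \<le> p" and one_le_weight: "\<forall>j\<in>\<Omega>. 1 \<le> \<phi> j"
begin

abbreviation Lp :: "('a \<Rightarrow> real) set" where "Lp \<equiv> lp_space \<Omega> \<phi> p"

text \<open>The \<open>p\<close>-th power of the distance; it satisfies a quasi-triangle inequality with constant
  \<open>2 powr p\<close>, which suffices for the nested-ball argument and avoids Minkowski's inequality.\<close>

definition dp :: "('a \<Rightarrow> real) \<Rightarrow> ('a \<Rightarrow> real) \<Rightarrow> real" where
  "dp f g = infsum (\<lambda>j. \<phi> j * \<bar>f j - g j\<bar> powr p) \<Omega>"

definition threshold :: "('a \<Rightarrow> real) \<Rightarrow> bool" where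
  "threshold h \<longleftrightarrow> (\<forall>j\<in>\<Omega>. 0 \<le> h j) \<and> (\<lambda>j. \<phi> j * h j powr p) summable_on \<Omega>"

definition dominating :: "('a \<Rightarrow> real) \<Rightarrow> ('a \<Rightarrow> real) set" where
  "dominating h = {f \<in> Lp. \<forall>j\<in>\<Omega>. h j \<le> \<bar>f j\<bar>}"

lemma p_pos: "0 < p"
  using one_le_p by simp

lemma weight_pos: "j \<in> \<Omega> \<Longrightarrow> 0 < \<phi> j"
  using one_le_weight by force

lemma weighted_powr_nonneg: "j \<in> \<Omega> \<Longrightarrow> 0 \<le> \<phi> j * t powr p"
  using weight_pos[of j] by simp

lemma mem_Lp:
  "f \<in> Lp \<longleftrightarrow> (\<forall>j. j \<notin> \<Omega> \<longrightarrow> f j = 0) \<and> (\<lambda>j. \<phi> j * \<bar>f j\<bar> powr p) summable_on \<Omega>"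
  unfolding lp_space_def by simp

lemma summable_weighted_add:
  assumes "(\<lambda>j. \<phi> j * \<bar>u j\<bar> powr p) summable_on \<Omega>" "(\<lambda>j. \<phi> j * \<bar>v j\<bar> powr p) summable_on \<Omega>"
  shows "(\<lambda>j. \<phi> j * \<bar>u j + v j\<bar> powr p) summable_on \<Omega>"
proof (rule summable_on_comparison_test)
  show "(\<lambda>j. 2 powr p * (\<phi> j * \<bar>u j\<bar> powr p) + 2 powr p * (\<phi> j * \<bar>v j\<bar> powr p)) summable_on \<Omega>"
    using assms by (intro summable_on_add summable_on_cmult_right)
  fix j assume j: "j \<in> \<Omega>"
  have "\<phi> j * \<bar>u j + v j\<bar> powr p \<le> \<phi> j * (2 powr p * (\<bar>u j\<bar> powr p + \<bar>v j\<bar> powr p))"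
    using abs_add_powr_le[of p "u j" "v j"] p_pos weight_pos[OF j] by (intro mult_left_mono) auto
  then show "\<phi> j * \<bar>u j + v j\<bar> powr p
      \<le> 2 powr p * (\<phi> j * \<bar>u j\<bar> powr p) + 2 powr p * (\<phi> j * \<bar>v j\<bar> powr p)"
    by (simp add: algebra_simps)
  show "0 \<le> \<phi> j * \<bar>u j + v j\<bar> powr p" using weighted_powr_nonneg[OF j] .
qed

lemma summable_weighted_diff:
  assumes "f \<in> Lp" "g \<in> Lp"
  shows "(\<lambda>j. \<phi> j * \<bar>f j - g j\<bar> powr p) summable_on \<Omega>"
  using summable_weighted_add[of f "\<lambda>j. - g j"] assms by (simp add: mem_Lp)

lemma Lp_memI:
  assumes "\<forall>j. j \<notin> \<Omega> \<longrightarrow> f j = 0" "g \<in> Lp"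
    and "(\<lambda>j. \<phi> j * \<bar>f j - g j\<bar> powr p) summable_on \<Omega>"
  shows "f \<in> Lp"
  using summable_weighted_add[of "\<lambda>j. f j - g j" g] assms by (simp add: mem_Lp)

lemma lp_dist_eq_dp: "lp_dist \<Omega> \<phi> p f g = dp f g powr (1 / p)"
  unfolding lp_dist_def dp_def ..

lemma dp_nonneg: "0 \<le> dp f g"
  unfolding dp_def by (rule infsum_nonneg) (rule weighted_powr_nonneg)

lemma dp_self: "dp f f = 0"
  unfolding dp_def by simp

lemma dp_quasi_triangle:
  assumes "f \<in> Lp" "g \<in> Lp" "k \<in> Lp"
  shows "dp f k \<le> 2 powr p * (dp f g + dp g k)"
proof -
  let ?a = "\<lambda>j. \<phi> j * \<bar>f j - g j\<bar> powr p" and ?b = "\<lambda>j. \<phi> j * \<bar>g j - k j\<bar> powr p"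
  have "dp f k \<le> infsum (\<lambda>j. 2 powr p * ?a j + 2 powr p * ?b j) \<Omega>"
    unfolding dp_def
  proof (rule infsum_mono)
    fix j assume j: "j \<in> \<Omega>"
    have "\<phi> j * \<bar>(f j - g j) + (g j - k j)\<bar> powr p
        \<le> \<phi> j * (2 powr p * (\<bar>f j - g j\<bar> powr p + \<bar>g j - k j\<bar> powr p))"
      using abs_add_powr_le[of p "f j - g j" "g j - k j"] p_pos weight_pos[OF j]
      by (intro mult_left_mono) auto
    then show "\<phi> j * \<bar>f j - k j\<bar> powr p \<le> 2 powr p * ?a j + 2 powr p * ?b j"
      by (simp add: algebra_simps)
  qed (use summable_weighted_diff assms in \<open>auto intro!: summable_on_add summable_on_cmult_right\<close>)
  also have "\<dots> = 2 powr p * (dp f g + dp g k)"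
    unfolding dp_def using summable_weighted_diff assms
    by (subst infsum_add) (auto intro!: summable_on_cmult_right simp: infsum_cmult_right distrib_left)
  finally show ?thesis .
qed

lemma dp_le_twice_scaled:
  assumes "f \<in> Lp" "g \<in> Lp" "k \<in> Lp" "dp f g \<le> M" "dp g k \<le> M"
  shows "dp f k \<le> 2 * 2 powr p * M"
proof -
  have "dp f k \<le> 2 powr p * (dp f g + dp g k)" by (rule dp_quasi_triangle[OF assms(1-3)])
  also have "\<dots> \<le> 2 powr p * (M + M)" using assms(4,5) by (intro mult_left_mono) auto
  finally show ?thesis by simp
qed

lemma two_le_two_powr_p: "2 \<le> 2 powr p"
  using powr_mono[of 1 p 2] one_le_p by simp

lemma weighted_le_dp:
  assumes "f \<in> Lp" "g \<in> Lp" "j \<in> \<Omega>"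
  shows "\<phi> j * \<bar>f j - g j\<bar> powr p \<le> dp f g"
proof -
  have "sum (\<lambda>j. \<phi> j * \<bar>f j - g j\<bar> powr p) {j} \<le> dp f g"
    unfolding dp_def using assms summable_weighted_diff
    by (intro finite_sum_le_infsum) (auto intro: weighted_powr_nonneg)
  then show ?thesis by simp
qed

lemma abs_diff_powr_le_dp:
  assumes "f \<in> Lp" "g \<in> Lp" "j \<in> \<Omega>"
  shows "\<bar>f j - g j\<bar> powr p \<le> dp f g"
proof -
  have "\<bar>f j - g j\<bar> powr p \<le> \<phi> j * \<bar>f j - g j\<bar> powr p"
    using one_le_weight assms(3) by (intro mult_le_cancel_right1[THEN iffD2]) auto
  then show ?thesis using weighted_le_dp[OF assms] by linarith
qed

lemma abs_diff_le_lp_dist: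
  assumes "f \<in> Lp" "g \<in> Lp" "j \<in> \<Omega>"
  shows "\<bar>f j - g j\<bar> \<le> lp_dist \<Omega> \<phi> p f g"
proof -
  have "\<bar>f j - g j\<bar> = (\<bar>f j - g j\<bar> powr p) powr (1 / p)"
    using p_pos by (simp add: powr_powr)
  also have "\<dots> \<le> dp f g powr (1 / p)"
    using abs_diff_powr_le_dp[OF assms] p_pos by (intro powr_mono2) auto
  finally show ?thesis by (simp add: lp_dist_eq_dp)
qed

lemma dp_pos:
  assumes "f \<in> Lp" "g \<in> Lp" "f \<noteq> g"
  shows "0 < dp f g"
proof -
  obtain j where j: "f j \<noteq> g j" using assms(3) by auto
  then have "j \<in> \<Omega>" using assms(1,2) unfolding mem_Lp by metis
  then have "0 < \<phi> j * \<bar>f j - g j\<bar> powr p" using j weight_pos by simp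
  then show ?thesis using weighted_le_dp[OF assms(1,2) \<open>j \<in> \<Omega>\<close>] by linarith
qed

lemma dp_le_of_weighted_le:
  assumes "f \<in> Lp" "\<forall>j. j \<notin> \<Omega> \<longrightarrow> g j = 0" "b summable_on \<Omega>"
    and "\<And>j. j \<in> \<Omega> \<Longrightarrow> \<phi> j * \<bar>f j - g j\<bar> powr p \<le> b j"
  shows "g \<in> Lp" "dp f g \<le> infsum b \<Omega>"
proof -
  have summable: "(\<lambda>j. \<phi> j * \<bar>f j - g j\<bar> powr p) summable_on \<Omega>"
    by (rule summable_on_comparison_test[OF assms(3) assms(4) weighted_powr_nonneg])
  then have "(\<lambda>j. \<phi> j * \<bar>g j - f j\<bar> powr p) summable_on \<Omega>"
    by (simp only: abs_minus_commute)
  then show "g \<in> Lp"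
    by (rule Lp_memI[OF assms(2,1)])
  show "dp f g \<le> infsum b \<Omega>"
    unfolding dp_def using summable assms(3) by (rule infsum_mono) (rule assms(4))
qed

lemma dp_le_of_pointwise_limit:
  assumes "f \<in> Lp" "\<And>m. c m \<in> Lp" "\<And>j. (\<lambda>m. c m j) \<longlonglongrightarrow> x j"
    and "\<And>m. k \<le> m \<Longrightarrow> dp f (c m) \<le> r"
  shows "(\<lambda>j. \<phi> j * \<bar>f j - x j\<bar> powr p) summable_on \<Omega>" "dp f x \<le> r"
proof -
  have finite_sums_le: "sum (\<lambda>j. \<phi> j * \<bar>f j - x j\<bar> powr p) F \<le> r" if "finite F" "F \<subseteq> \<Omega>" for F
  proof (rule LIMSEQ_le_const2)
    show "(\<lambda>m. \<Sum>j\<in>F. \<phi> j * \<bar>f j - c m j\<bar> powr p) \<longlonglongrightarrow> (\<Sum>j\<in>F. \<phi> j * \<bar>f j - x j\<bar> powr p)"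
      using p_pos assms(3) by (intro tendsto_intros tendsto_powr2) auto
    have "(\<Sum>j\<in>F. \<phi> j * \<bar>f j - c m j\<bar> powr p) \<le> dp f (c m)" for m
      unfolding dp_def using that summable_weighted_diff[OF assms(1,2)]
      by (intro finite_sum_le_infsum) (auto intro: weighted_powr_nonneg)
    then show "\<exists>N. \<forall>m\<ge>N. (\<Sum>j\<in>F. \<phi> j * \<bar>f j - c m j\<bar> powr p) \<le> r"
      using assms(4) by (meson order_trans)
  qed
  show summable: "(\<lambda>j. \<phi> j * \<bar>f j - x j\<bar> powr p) summable_on \<Omega>"
    by (rule nonneg_bdd_above_summable_on[OF weighted_powr_nonneg bdd_aboveI2])
      (use finite_sums_le in blast)+
  show "dp f x \<le> r"
    unfolding dp_def using summable finite_sums_le by (rule infsum_le_finite_sums)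
qed

lemma pointwise_convergent_of_dp_cauchy:
  assumes c_mem: "\<And>m. c m \<in> Lp" and r_lim: "r \<longlonglongrightarrow> 0"
    and cauchy: "\<And>k m. k \<le> m \<Longrightarrow> dp (c k) (c m) \<le> r k"
  shows "convergent (\<lambda>m. c m j)"
  unfolding Cauchy_convergent_iff[symmetric]
proof (rule CauchyI)
  have coordinate_bound: "\<bar>c k j - c m j\<bar> \<le> r k powr (1 / p)" if "k \<le> m" for k m
  proof (cases "j \<in> \<Omega>")
    case True
    have "\<bar>c k j - c m j\<bar> \<le> dp (c k) (c m) powr (1 / p)"
      using abs_diff_le_lp_dist[OF c_mem c_mem True] by (simp add: lp_dist_eq_dp)
    also have "\<dots> \<le> r k powr (1 / p)"
      using cauchy[OF that] dp_nonneg p_pos by (intro powr_mono2) auto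
    finally show ?thesis .
  next
    case False
    then show ?thesis using c_mem[of k] c_mem[of m] by (auto simp: mem_Lp)
  qed
  fix e :: real assume e: "0 < e"
  obtain k where "norm (r k - 0) < (e / 2) powr p"
    using LIMSEQ_D[OF r_lim, of "(e / 2) powr p"] e by auto
  then have k: "r k < (e / 2) powr p" by simp
  have "r k powr (1 / p) < ((e / 2) powr p) powr (1 / p)"
    using k dp_nonneg[of "c k" "c k"] cauchy[of k k] p_pos by (intro powr_less_mono2) auto
  also have "\<dots> = e / 2" using e p_pos by (simp add: powr_powr)
  finally have "r k powr (1 / p) < e / 2" .
  then have "\<bar>c m j - c n j\<bar> < e" if "k \<le> m" "k \<le> n" for m n
    using coordinate_bound[OF that(1)] coordinate_bound[OF that(2)] by linarith
  then show "\<exists>M. \<forall>m\<ge>M. \<forall>n\<ge>M. norm (c m j - c n j) < e" by auto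
qed

lemma Lp_complete:
  assumes c_mem: "\<And>m. c m \<in> Lp" and r_lim: "r \<longlonglongrightarrow> 0"
    and cauchy: "\<And>k m. k \<le> m \<Longrightarrow> dp (c k) (c m) \<le> r k"
  obtains x where "x \<in> Lp" "\<And>k. dp (c k) x \<le> r k" "\<And>j. (\<lambda>m. c m j) \<longlonglongrightarrow> x j"
proof -
  define x where "x j = lim (\<lambda>m. c m j)" for j
  have lim: "(\<lambda>m. c m j) \<longlonglongrightarrow> x j" for j
    using pointwise_convergent_of_dp_cauchy[OF assms, of j] unfolding x_def
    by (simp add: convergent_LIMSEQ_iff)
  have x_zero: "\<forall>j. j \<notin> \<Omega> \<longrightarrow> x j = 0"
  proof (intro allI impI)
    fix j assume "j \<notin> \<Omega>"
    then have "(\<lambda>m. c m j) = (\<lambda>m. 0)" using c_mem by (simp add: mem_Lp)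
    then show "x j = 0" using lim[of j] by (simp add: LIMSEQ_const_iff)
  qed
  have "(\<lambda>j. \<phi> j * \<bar>c 0 j - x j\<bar> powr p) summable_on \<Omega>"
    by (rule dp_le_of_pointwise_limit(1)[OF c_mem c_mem lim cauchy])
  then have "x \<in> Lp"
    by (intro Lp_memI[OF x_zero c_mem]) (simp only: abs_minus_commute)
  moreover have "dp (c k) x \<le> r k" for k
    by (rule dp_le_of_pointwise_limit(2)[OF c_mem c_mem lim cauchy])
  ultimately show ?thesis using lim that by blast
qed

lemma dominating_antimono: "(\<forall>j\<in>\<Omega>. h j \<le> h' j) \<Longrightarrow> dominating h' \<subseteq> dominating h"
  unfolding dominating_def by force

lemma dominating_closed:
  assumes "x \<in> Lp" "\<And>j. (\<lambda>m. c m j) \<longlonglongrightarrow> x j" "\<And>m. k \<le> m \<Longrightarrow> c m \<in> dominating h"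
  shows "x \<in> dominating h"
  unfolding dominating_def
proof (intro CollectI conjI ballI assms(1))
  fix j assume "j \<in> \<Omega>"
  then have "\<forall>m\<ge>k. h j \<le> \<bar>c m j\<bar>" using assms(3) unfolding dominating_def by blast
  then show "h j \<le> \<bar>x j\<bar>"
    by (intro LIMSEQ_le_const[OF tendsto_rabs[OF assms(2)]]) blast
qed

definition raise_fun :: "('a \<Rightarrow> real) \<Rightarrow> ('a \<Rightarrow> real) \<Rightarrow> 'a \<Rightarrow> real" where
  "raise_fun f h j = (if j \<in> \<Omega> then raise (f j) (h j) else 0)"

lemma raise_fun_zero_outside: "\<forall>j. j \<notin> \<Omega> \<longrightarrow> raise_fun f h j = 0"
  by (simp add: raise_fun_def)

lemma raise_fun_mem_dominating:
  assumes "\<forall>j\<in>\<Omega>. 0 \<le> h j" "raise_fun f h \<in> Lp"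
  shows "raise_fun f h \<in> dominating h"
  using assms unfolding dominating_def raise_fun_def by (auto simp: abs_raise)

lemma abs_diff_raise_fun_le:
  assumes "j \<in> \<Omega>" "h j \<le> \<bar>f j\<bar>" "h j \<le> hh j" "0 \<le> hh j"
  shows "\<bar>f j - raise_fun f hh j\<bar> \<le> hh j - h j"
proof -
  have "\<bar>raise_fun f hh j - f j\<bar> = max 0 (hh j - \<bar>f j\<bar>)"
    using abs_raise_diff[of "hh j" "f j"] assms(1,4) by (simp add: raise_fun_def)
  then show ?thesis using assms(2,3) by (simp add: abs_minus_commute)
qed

lemma raise_fun_close:
  assumes "x \<in> Lp" "y \<in> Lp" "\<forall>j\<in>\<Omega>. 0 \<le> h j" "0 \<le> th" "th \<le> 1"
    and "\<forall>j\<in>\<Omega>. \<bar>x j - y j\<bar> < m" "\<forall>j\<in>\<Omega>. h j + m \<le> \<bar>x j\<bar> \<or> h j \<le> th * \<bar>x j\<bar>"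
  shows "raise_fun y h \<in> dominating h" "dp y (raise_fun y h) \<le> th powr p * dp x y"
proof -
  have "\<phi> j * \<bar>y j - raise_fun y h j\<bar> powr p \<le> th powr p * (\<phi> j * \<bar>x j - y j\<bar> powr p)"
    if j: "j \<in> \<Omega>" for j
  proof -
    have "\<bar>y j - raise_fun y h j\<bar> powr p \<le> (th * \<bar>x j - y j\<bar>) powr p"
      using abs_raise_diff_le_scaled[of "h j" th "x j" "y j" m] assms(3-7) j p_pos
      by (intro powr_mono2) (auto simp: raise_fun_def abs_minus_commute)
    also have "\<dots> = th powr p * \<bar>x j - y j\<bar> powr p"
      using assms(4) by (simp add: powr_mult)
    finally show ?thesis
      using weight_pos[OF j] by (simp add: mult_left_mono algebra_simps)
  qed
  moreover have "(\<lambda>j. th powr p * (\<phi> j * \<bar>x j - y j\<bar> powr p)) summable_on \<Omega>"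
    using summable_weighted_diff[OF assms(1,2)] by (rule summable_on_cmult_right)
  ultimately have "raise_fun y h \<in> Lp"
    and "dp y (raise_fun y h) \<le> infsum (\<lambda>j. th powr p * (\<phi> j * \<bar>x j - y j\<bar> powr p)) \<Omega>"
    using dp_le_of_weighted_le[OF assms(2) raise_fun_zero_outside] by blast+
  then show "raise_fun y h \<in> dominating h" "dp y (raise_fun y h) \<le> th powr p * dp x y"
    using raise_fun_mem_dominating assms(3) by (auto simp: dp_def infsum_cmult_right')
qed

text \<open>The threshold is raised by a constant \<open>m\<close> on a finite set \<open>H\<close> carrying most of the mass
  of \<open>h\<close> and multiplied by \<open>1 / th\<close> off \<open>H\<close>. Both changes are cheap in \<open>dp\<close>, and afterwards
  every point of \<open>dominating hh\<close> lies, in each coordinate, either \<open>m\<close> above \<open>h\<close> or a factor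
  \<open>1 / th\<close> above it, which is what \<open>porous_escape\<close> needs.\<close>

lemma fattening_budget:
  assumes "threshold h" "0 < th" "0 < R"
  obtains H m where "finite H" "H \<subseteq> \<Omega>" "0 < m" "m \<le> 1"
    "(\<lambda>j. if j \<in> H then \<phi> j * m else \<phi> j * (h j / th) powr p) summable_on \<Omega>"
    "infsum (\<lambda>j. if j \<in> H then \<phi> j * m else \<phi> j * (h j / th) powr p) \<Omega> \<le> R"
proof -
  let ?t = "\<lambda>j. \<phi> j * (h j / th) powr p"
  have "?t = (\<lambda>j. inverse (th powr p) * (\<phi> j * h j powr p))"
    using assms(2) by (auto simp: powr_divide field_simps)
  then have t_summable: "?t summable_on \<Omega>"
    and t_infsum: "infsum ?t A = inverse (th powr p) * infsum (\<lambda>j. \<phi> j * h j powr p) A" for A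
    using assms(1) unfolding threshold_def by (auto intro: summable_on_cmult_right simp: infsum_cmult_right')
  obtain H where H: "finite H" "H \<subseteq> \<Omega>"
    and tail: "infsum (\<lambda>j. \<phi> j * h j powr p) (\<Omega> - H) \<le> th powr p * R / 2"
    using infsum_tail_small[of "\<lambda>j. \<phi> j * h j powr p" \<Omega> "th powr p * R / 2"] assms
    unfolding threshold_def by auto
  define S where "S = sum \<phi> H"
  have "0 \<le> S" unfolding S_def using H weight_pos by (intro sum_nonneg) (auto intro: less_imp_le)
  define m where "m = min 1 (R / (2 * (1 + S)))"
  have m: "0 < m" "m \<le> 1" unfolding m_def using assms(3) \<open>0 \<le> S\<close> by auto
  have "m * S \<le> R / (2 * (1 + S)) * S" unfolding m_def using \<open>0 \<le> S\<close> by (intro mult_right_mono) auto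
  also have "\<dots> \<le> R / 2" using assms(3) \<open>0 \<le> S\<close> by (simp add: field_simps)
  finally have mS: "m * S \<le> R / 2" .
  let ?b = "\<lambda>j. if j \<in> H then \<phi> j * m else ?t j"
  have "?b summable_on (\<Omega> - H) \<longleftrightarrow> ?t summable_on (\<Omega> - H)"
    by (rule summable_on_cong) auto
  then have "?b summable_on (\<Omega> - H)"
    using summable_on_subset[OF t_summable, of "\<Omega> - H"] by blast
  with H(1) have b_summable: "?b summable_on \<Omega>" by (rule summable_on_of_cofinite)
  have "infsum ?b (\<Omega> - H) = infsum ?b \<Omega> - infsum ?b H"
    using b_summable H by (intro infsum_Diff) auto
  moreover have "infsum ?b H = m * S"
    using H(1) unfolding S_def by (simp add: sum_distrib_left mult.commute)
  moreover have "infsum ?b (\<Omega> - H) = inverse (th powr p) * infsum (\<lambda>j. \<phi> j * h j powr p) (\<Omega> - H)"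
    unfolding t_infsum[symmetric] by (rule infsum_cong) auto
  moreover have "inverse (th powr p) * infsum (\<lambda>j. \<phi> j * h j powr p) (\<Omega> - H) \<le> R / 2"
  proof -
    have "inverse (th powr p) * infsum (\<lambda>j. \<phi> j * h j powr p) (\<Omega> - H)
        \<le> inverse (th powr p) * (th powr p * R / 2)"
      using tail by (intro mult_left_mono) auto
    also have "\<dots> = R / 2" using assms(2) by simp
    finally show ?thesis .
  qed
  ultimately have "infsum ?b \<Omega> \<le> R" using mS by linarith
  then show ?thesis using that H m b_summable by blast
qed

lemma fattening:
  assumes "threshold h" "c \<in> dominating h" "0 < th" "th \<le> 1" "0 < R"
  obtains hh m where "threshold hh" "\<forall>j\<in>\<Omega>. h j \<le> hh j" "0 < m"
    "\<forall>j\<in>\<Omega>. h j + m \<le> hh j \<or> h j \<le> th * hh j"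
    "raise_fun c hh \<in> dominating hh" "dp c (raise_fun c hh) \<le> R"
proof -
  obtain H m where H: "finite H" "H \<subseteq> \<Omega>" and m: "0 < m" "m \<le> 1"
    and b: "(\<lambda>j. if j \<in> H then \<phi> j * m else \<phi> j * (h j / th) powr p) summable_on \<Omega>"
      "infsum (\<lambda>j. if j \<in> H then \<phi> j * m else \<phi> j * (h j / th) powr p) \<Omega> \<le> R"
    using fattening_budget[OF assms(1,3,5)] by blast
  define hh where "hh j = (if j \<in> H then h j + m else h j / th)" for j
  have h_nonneg: "\<forall>j\<in>\<Omega>. 0 \<le> h j" using assms(1) unfolding threshold_def by blast
  have h_le_hh: "\<forall>j\<in>\<Omega>. h j \<le> hh j"
    using h_nonneg m(1) assms(3,4) by (auto simp: hh_def le_divide_eq mult_left_le)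
  have alternatives: "\<forall>j\<in>\<Omega>. h j + m \<le> hh j \<or> h j \<le> th * hh j"
    using assms(3) by (simp add: hh_def)
  have "(\<lambda>j. \<phi> j * hh j powr p) summable_on (\<Omega> - H) \<longleftrightarrow>
      (\<lambda>j. if j \<in> H then \<phi> j * m else \<phi> j * (h j / th) powr p) summable_on (\<Omega> - H)"
    by (rule summable_on_cong) (simp add: hh_def)
  then have "(\<lambda>j. \<phi> j * hh j powr p) summable_on (\<Omega> - H)"
    using summable_on_subset[OF b(1), of "\<Omega> - H"] by blast
  moreover have hh_nonneg: "\<forall>j\<in>\<Omega>. 0 \<le> hh j" using h_nonneg h_le_hh by (meson order_trans)
  ultimately have "threshold hh"
    using H(1) unfolding threshold_def by (auto intro: summable_on_of_cofinite)
  have pointwise: "\<phi> j * \<bar>c j - raise_fun c hh j\<bar> powr p \<le> (if j \<in> H then \<phi> j * m else \<phi> j * (h j / th) powr p)"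
    if j: "j \<in> \<Omega>" for j
  proof -
    have "h j \<le> \<bar>c j\<bar>" using assms(2) j unfolding dominating_def by blast
    then have dist_le: "\<bar>c j - raise_fun c hh j\<bar> \<le> hh j - h j"
      using abs_diff_raise_fun_le h_le_hh hh_nonneg j by blast
    show ?thesis
    proof (cases "j \<in> H")
      case True
      then have "\<bar>c j - raise_fun c hh j\<bar> powr p \<le> m powr p"
        using dist_le p_pos by (intro powr_mono2) (auto simp: hh_def)
      also have "\<dots> \<le> m" using m one_le_p by (intro powr_le_one_le) auto
      finally show ?thesis using True weight_pos[OF j] by simp
    next
      case False
      then have "\<bar>c j - raise_fun c hh j\<bar> powr p \<le> (h j / th) powr p"
        using dist_le h_nonneg j p_pos by (intro powr_mono2) (auto simp: hh_def)
      then show ?thesis using False weight_pos[OF j] by simp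
    qed
  qed
  have c_mem: "c \<in> Lp" using assms(2) unfolding dominating_def by blast
  have "raise_fun c hh \<in> Lp"
    by (rule dp_le_of_weighted_le(1)[OF c_mem raise_fun_zero_outside b(1) pointwise])
  moreover have "dp c (raise_fun c hh) \<le> R"
    using dp_le_of_weighted_le(2)[OF c_mem raise_fun_zero_outside b(1) pointwise] b(2) by linarith
  ultimately show ?thesis
    using that[OF \<open>threshold hh\<close> h_le_hh m(1) alternatives] raise_fun_mem_dominating[OF hh_nonneg] by blast
qed

lemma lp_dist_less_scaled:
  assumes "0 < lam" "dp f g < lam powr p * dp x y"
  shows "lp_dist \<Omega> \<phi> p f g < lam * lp_dist \<Omega> \<phi> p x y"
proof -
  have "dp f g powr (1 / p) < (lam powr p * dp x y) powr (1 / p)"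
    using assms(2) dp_nonneg p_pos by (intro powr_less_mono2) auto
  also have "\<dots> = lam * dp x y powr (1 / p)"
    using assms(1) dp_nonneg p_pos by (simp add: powr_mult powr_powr)
  finally show ?thesis by (simp add: lp_dist_eq_dp)
qed

lemma dp_lt_of_near_projection:
  assumes "y \<in> Lp" "z \<in> Lp" "w \<in> Lp" "0 < lam" "0 < ep"
    and "dp y z \<le> (lam / 4) powr p * ep" "dp z w \<le> lam powr p * ep / (4 * 2 powr p)"
  shows "dp y w < lam powr p * ep"
proof -
  define Q where "Q = 2 powr p"
  have "2 \<le> Q" unfolding Q_def by (rule two_le_two_powr_p)
  have "Q * (lam / 4) powr p = (2 * (lam / 4)) powr p"
    unfolding Q_def using assms(4) by (subst powr_mult) auto
  also have "\<dots> = lam powr p / Q"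
    unfolding Q_def using assms(4) by (simp add: powr_divide)
  finally have Q_scaled: "Q * (lam / 4) powr p = lam powr p / Q" .
  have "dp y w \<le> Q * (dp y z + dp z w)"
    unfolding Q_def by (rule dp_quasi_triangle[OF assms(1-3)])
  also have "\<dots> \<le> Q * ((lam / 4) powr p * ep + lam powr p * ep / (4 * Q))"
    using assms(6,7) \<open>2 \<le> Q\<close> unfolding Q_def by (intro mult_left_mono add_mono) auto
  also have "\<dots> = lam powr p * ep / Q + lam powr p * ep / 4"
    using Q_scaled \<open>2 \<le> Q\<close> by (simp add: field_simps)
  also have "\<dots> < lam powr p * ep"
  proof -
    have "lam powr p * ep / Q \<le> lam powr p * ep / 2"
      using \<open>2 \<le> Q\<close> assms(4,5) by (intro divide_left_mono) auto
    moreover have "0 < lam powr p * ep" using assms(4,5) by simp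
    ultimately show ?thesis by linarith
  qed
  finally show ?thesis .
qed

text \<open>Near a point \<open>x\<close> of a porous set \<open>A\<close> lies a hole of \<open>A\<close>, and
  because \<open>\<bar>x\<bar>\<close> is well above \<open>h\<close>, projecting the centre of that hole onto \<open>dominating h\<close>
  moves it by a small fraction of the radius, so a smaller hole is centred in \<open>dominating h\<close>.\<close>

lemma porous_escape:
  assumes lam: "0 < lam" "lam < 1"
    and porous_x: "porous_at Lp (lp_dist \<Omega> \<phi> p) lam A x" and x_mem: "x \<in> Lp"
    and h_nonneg: "\<forall>j\<in>\<Omega>. 0 \<le> h j" and "0 < m"
    and far: "\<forall>j\<in>\<Omega>. h j + m \<le> \<bar>x j\<bar> \<or> h j \<le> lam / 4 * \<bar>x j\<bar>" and "0 < \<delta>"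
  obtains z \<rho> where "z \<in> dominating h" "0 < \<rho>" "\<rho> \<le> \<delta>" "dp x z \<le> \<delta>"
    "\<forall>w\<in>dominating h. dp z w \<le> \<rho> \<longrightarrow> w \<notin> A"
proof -
  define Q where "Q = 2 powr p"
  have "2 \<le> Q" unfolding Q_def by (rule two_le_two_powr_p)
  define e where "e = \<delta> / (2 * Q)"
  have "0 < e" "e \<le> \<delta>" using \<open>2 \<le> Q\<close> \<open>0 < \<delta>\<close> by (auto simp: e_def field_simps)
  obtain y where y_mem: "y \<in> Lp" and xy_small: "lp_dist \<Omega> \<phi> p x y < min m (e powr (1 / p))"
    and "y \<noteq> x" and hole: "\<forall>z\<in>Lp. lp_dist \<Omega> \<phi> p y z < lam * lp_dist \<Omega> \<phi> p x y \<longrightarrow> z \<notin> A"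
    using porous_x[unfolded porous_at_def, rule_format, of "min m (e powr (1 / p))"]
      \<open>0 < m\<close> \<open>0 < e\<close> by auto
  define ep where "ep = dp x y"
  have "0 < ep" unfolding ep_def using dp_pos x_mem y_mem \<open>y \<noteq> x\<close> by auto
  have "ep < e"
  proof (rule ccontr)
    assume "\<not> ep < e"
    then have "e powr (1 / p) \<le> ep powr (1 / p)"
      using \<open>0 < e\<close> p_pos by (intro powr_mono2) auto
    then show False using xy_small by (simp add: ep_def lp_dist_eq_dp)
  qed
  have "\<forall>j\<in>\<Omega>. \<bar>x j - y j\<bar> < m"
    using abs_diff_le_lp_dist[OF x_mem y_mem] xy_small by (meson min_less_iff_conj order_le_less_trans)
  then have z: "raise_fun y h \<in> dominating h" "dp y (raise_fun y h) \<le> (lam / 4) powr p * ep"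
    using raise_fun_close[OF x_mem y_mem h_nonneg _ _ _ far] lam unfolding ep_def by auto
  define z where "z = raise_fun y h"
  have z_mem: "z \<in> Lp" using z unfolding z_def dominating_def by blast
  have "(lam / 4) powr p \<le> 1" using lam p_pos by (intro powr_le1) auto
  then have "(lam / 4) powr p * ep \<le> ep" using \<open>0 < ep\<close> by (simp add: mult_left_le_one_le)
  then have "dp y z \<le> ep" using z unfolding z_def by linarith
  have "dp x z \<le> \<delta>"
  proof -
    have "dp x z \<le> 2 * Q * ep"
      unfolding Q_def using dp_le_twice_scaled[OF x_mem y_mem z_mem] \<open>dp y z \<le> ep\<close> ep_def by simp
    also have "\<dots> \<le> 2 * Q * e" using \<open>ep < e\<close> \<open>2 \<le> Q\<close> by simp
    finally show ?thesis using \<open>2 \<le> Q\<close> by (simp add: e_def)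
  qed
  define \<rho> where "\<rho> = lam powr p * ep / (4 * Q)"
  have "0 < \<rho>" unfolding \<rho>_def using lam \<open>0 < ep\<close> \<open>2 \<le> Q\<close> by simp
  have "lam powr p \<le> 1" using lam p_pos by (intro powr_le1) auto
  then have "\<rho> \<le> ep" unfolding \<rho>_def using \<open>0 < ep\<close> \<open>2 \<le> Q\<close> by (simp add: field_simps)
  have "w \<notin> A" if w: "w \<in> dominating h" "dp z w \<le> \<rho>" for w
  proof -
    have w_mem: "w \<in> Lp" using w(1) unfolding dominating_def by blast
    have "dp y w < lam powr p * ep"
      using dp_lt_of_near_projection[OF y_mem z_mem w_mem lam(1) \<open>0 < ep\<close>] z w(2)
      unfolding z_def \<rho>_def Q_def by blast
    then have "lp_dist \<Omega> \<phi> p y w < lam * lp_dist \<Omega> \<phi> p x y"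
      using lam(1) unfolding ep_def by (intro lp_dist_less_scaled)
    then show ?thesis using hole w_mem by blast
  qed
  then show ?thesis
    using that z(1) \<open>0 < \<rho>\<close> \<open>\<rho> \<le> ep\<close> \<open>ep < e\<close> \<open>e \<le> \<delta>\<close> \<open>dp x z \<le> \<delta>\<close> unfolding z_def by force
qed

lemma porous_step:
  assumes lam: "0 < lam" "lam < 1" and porous_A: "porous Lp (lp_dist \<Omega> \<phi> p) lam A"
    and "threshold h" "c \<in> dominating h" "0 < e"
  obtains h' c' r' where "threshold h'" "\<forall>j\<in>\<Omega>. h j \<le> h' j" "c' \<in> dominating h'"
    "0 < r'" "r' \<le> e" "dp c c' \<le> e" "\<forall>w\<in>dominating h'. dp c' w \<le> r' \<longrightarrow> w \<notin> A"
proof -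
  define K where "K = 2 * 2 powr p"
  have "4 \<le> K" using two_le_two_powr_p unfolding K_def by simp
  define R where "R = e / (K * K)"
  have "16 \<le> K * K" using mult_mono[OF \<open>4 \<le> K\<close> \<open>4 \<le> K\<close>] \<open>4 \<le> K\<close> by simp
  then have "0 < R" "R \<le> K * R" "R \<le> e" "K * (K * R) = e"
    using \<open>0 < e\<close> \<open>4 \<le> K\<close> by (auto simp: R_def field_simps)
  obtain hh m where hh: "threshold hh" "\<forall>j\<in>\<Omega>. h j \<le> hh j" and "0 < m"
    and alternatives: "\<forall>j\<in>\<Omega>. h j + m \<le> hh j \<or> h j \<le> lam / 4 * hh j"
    and cs: "raise_fun c hh \<in> dominating hh" "dp c (raise_fun c hh) \<le> R"
    using fattening[OF assms(4,5), of "lam / 4" R] lam \<open>0 < R\<close> by auto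
  have c_mem: "c \<in> Lp" and cs_mem: "raise_fun c hh \<in> Lp"
    using assms(5) cs(1) unfolding dominating_def by auto
  show ?thesis
  proof (cases "\<exists>x\<in>dominating hh. dp (raise_fun c hh) x \<le> R \<and> x \<in> A")
    case False
    then show ?thesis using that[OF hh cs(1) \<open>0 < R\<close> \<open>R \<le> e\<close>] cs(2) \<open>R \<le> e\<close> by auto
  next
    case True
    then obtain x where x: "x \<in> dominating hh" "dp (raise_fun c hh) x \<le> R" "x \<in> A" by blast
    have x_mem: "x \<in> Lp" using x(1) unfolding dominating_def by blast
    have "\<forall>j\<in>\<Omega>. h j + m \<le> \<bar>x j\<bar> \<or> h j \<le> lam / 4 * \<bar>x j\<bar>"
    proof
      fix j assume j: "j \<in> \<Omega>"
      then have "hh j \<le> \<bar>x j\<bar>" using x(1) unfolding dominating_def by blast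
      then have "lam / 4 * hh j \<le> lam / 4 * \<bar>x j\<bar>" using lam by (intro mult_left_mono) auto
      then show "h j + m \<le> \<bar>x j\<bar> \<or> h j \<le> lam / 4 * \<bar>x j\<bar>"
        using alternatives \<open>hh j \<le> \<bar>x j\<bar>\<close> j by fastforce
    qed
    moreover have "\<forall>j\<in>\<Omega>. 0 \<le> h j" using assms(4) unfolding threshold_def by blast
    moreover have "porous_at Lp (lp_dist \<Omega> \<phi> p) lam A x"
      using porous_A x(3) unfolding porous_def by blast
    ultimately obtain z \<rho> where z: "z \<in> dominating h" "0 < \<rho>" "\<rho> \<le> R" "dp x z \<le> R"
      and hole: "\<forall>w\<in>dominating h. dp z w \<le> \<rho> \<longrightarrow> w \<notin> A"
      using porous_escape[OF lam _ x_mem _ \<open>0 < m\<close> _ \<open>0 < R\<close>] by blast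
    have z_mem: "z \<in> Lp" using z(1) unfolding dominating_def by blast
    have "dp (raise_fun c hh) z \<le> K * R"
      unfolding K_def by (rule dp_le_twice_scaled[OF cs_mem x_mem z_mem x(2) z(4)])
    moreover have "dp c (raise_fun c hh) \<le> K * R" using cs(2) \<open>R \<le> K * R\<close> by linarith
    ultimately have "dp c z \<le> K * (K * R)"
      unfolding K_def by (intro dp_le_twice_scaled[OF c_mem cs_mem z_mem])
    then show ?thesis
      using that[OF assms(4) _ z(1,2) _ _ hole] \<open>\<rho> \<le> R\<close> \<open>R \<le> e\<close> \<open>K * (K * R) = e\<close> by auto
  qed
qed

lemma dp_ball_subset:
  assumes "c \<in> Lp" "c' \<in> Lp" "dp c c' \<le> r / (2 * 2 powr p)" "r' \<le> r / (2 * 2 powr p)"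
    and "w \<in> Lp" "dp c' w \<le> r'"
  shows "dp c w \<le> r"
  using dp_le_twice_scaled[OF assms(1,2,5,3)] assms(4,6) by simp

lemma nested_balls_common_point:
  assumes mem: "\<And>n. c n \<in> dominating (h n)" and r_pos: "\<And>n. 0 < r n"
    and r_shrink: "\<And>n. r (Suc n) \<le> r n / 4" and h_mono: "\<And>n j. j \<in> \<Omega> \<Longrightarrow> h n j \<le> h (Suc n) j"
    and nested: "\<And>n w. w \<in> Lp \<Longrightarrow> dp (c (Suc n)) w \<le> r (Suc n) \<Longrightarrow> dp (c n) w \<le> r n"
  obtains x where "\<And>n. x \<in> dominating (h n)" "\<And>n. dp (c n) x \<le> r n"
proof -
  have c_mem: "c n \<in> Lp" for n using mem unfolding dominating_def by blast
  have "r n \<le> r 0 * (1 / 4) ^ n" for n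
  proof (induction n)
    case (Suc n)
    then show ?case using r_shrink[of n] by simp
  qed simp
  then have "\<forall>n. norm (r n) \<le> r 0 * (1 / 4) ^ n"
    using r_pos by (simp add: less_imp_le)
  moreover have "(\<lambda>n. r 0 * (1 / 4) ^ n) \<longlonglongrightarrow> 0"
    by (intro tendsto_mult_right_zero LIMSEQ_power_zero) simp
  ultimately have "r \<longlonglongrightarrow> 0"
    by (rule Lim_null_comparison[OF always_eventually])
  have ball_mono: "dp (c k) w \<le> r k" if "k \<le> m" "w \<in> Lp" "dp (c m) w \<le> r m" for k m w
    using that
  proof (induction m rule: dec_induct)
    case (step m)
    then show ?case using nested[of w m] by blast
  qed simp
  have cauchy: "dp (c k) (c m) \<le> r k" if "k \<le> m" for k m
    using ball_mono[OF that c_mem] r_pos[of m] by (simp add: dp_self less_imp_le)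
  obtain x where x: "x \<in> Lp" "\<And>k. dp (c k) x \<le> r k" "\<And>j. (\<lambda>m. c m j) \<longlonglongrightarrow> x j"
    using Lp_complete[OF c_mem \<open>r \<longlonglongrightarrow> 0\<close> cauchy] by blast
  have h_le: "\<forall>j\<in>\<Omega>. h k j \<le> h m j" if "k \<le> m" for k m
    using that
  proof (induction m rule: dec_induct)
    case (step m)
    then show ?case using h_mono[of _ m] order_trans by blast
  qed simp
  have "c m \<in> dominating (h k)" if "k \<le> m" for k m
    using dominating_antimono[OF h_le[OF that]] mem[of m] by blast
  then have "x \<in> dominating (h n)" for n by (rule dominating_closed[OF x(1,3)])
  then show ?thesis using that x(2) by blast
qed

lemma porous_nested_step:
  assumes "0 < lam" "lam < 1" "porous Lp (lp_dist \<Omega> \<phi> p) lam A"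
    and "threshold h" "c \<in> dominating h" "0 < r"
  obtains h' c' r' where "threshold h'" "\<forall>j\<in>\<Omega>. h j \<le> h' j" "c' \<in> dominating h'"
    "0 < r'" "r' \<le> r / 4" "\<forall>w\<in>Lp. dp c' w \<le> r' \<longrightarrow> dp c w \<le> r"
    "\<forall>w\<in>dominating h'. dp c' w \<le> r' \<longrightarrow> w \<notin> A"
proof -
  define e where "e = r / (2 * 2 powr p)"
  have "0 < e" using assms(6) by (simp add: e_def)
  have "e \<le> r / (2 * 2)"
    unfolding e_def using assms(6) two_le_two_powr_p by (intro divide_left_mono) auto
  obtain h' c' r' where h': "threshold h'" "\<forall>j\<in>\<Omega>. h j \<le> h' j"
    and c': "c' \<in> dominating h'" and r': "0 < r'" "r' \<le> e" and "dp c c' \<le> e"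
    and hole: "\<forall>w\<in>dominating h'. dp c' w \<le> r' \<longrightarrow> w \<notin> A"
    by (rule porous_step[OF assms(1-5) \<open>0 < e\<close>])
  have "c \<in> Lp" "c' \<in> Lp" using assms(5) c' unfolding dominating_def by auto
  then have "\<forall>w\<in>Lp. dp c' w \<le> r' \<longrightarrow> dp c w \<le> r"
    using dp_ball_subset[of c c' r r'] \<open>dp c c' \<le> e\<close> r'(2) unfolding e_def by blast
  then show ?thesis using that h' c' r' hole \<open>e \<le> r / (2 * 2)\<close> by simp
qed

lemma restrict_mem_dominating:
  assumes "threshold h"
  shows "(\<lambda>j. if j \<in> \<Omega> then h j else 0) \<in> dominating h"
proof -
  have h_nonneg: "\<forall>j\<in>\<Omega>. 0 \<le> h j" using assms unfolding threshold_def by blast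
  have "(\<lambda>j. \<phi> j * \<bar>if j \<in> \<Omega> then h j else 0\<bar> powr p) summable_on \<Omega>
      \<longleftrightarrow> (\<lambda>j. \<phi> j * h j powr p) summable_on \<Omega>"
    by (rule summable_on_cong) (simp add: h_nonneg)
  then show ?thesis
    using assms h_nonneg unfolding threshold_def dominating_def by (auto simp: mem_Lp)
qed

text \<open>The state of the construction is a triple \<open>(threshold, centre, radius)\<close>; \<open>P\<close> pins the
  initial threshold to \<open>h\<close>, and step \<open>n\<close> moves the ball off \<open>A n\<close>.\<close>

theorem dominating_not_sigma_porous:
  assumes "threshold h" "0 < lam" "lam < 1"
  shows "\<not> sigma_porous Lp (lp_dist \<Omega> \<phi> p) lam (dominating h)"
proof
  assume "sigma_porous Lp (lp_dist \<Omega> \<phi> p) lam (dominating h)"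
  then obtain A :: "nat \<Rightarrow> ('a \<Rightarrow> real) set" where cover: "dominating h = (\<Union>n. A n)"
    and porous_A: "\<And>n. porous Lp (lp_dist \<Omega> \<phi> p) lam (A n)"
    unfolding sigma_porous_def by blast
  define P where "P n s \<longleftrightarrow> (n = 0 \<longrightarrow> fst s = h) \<and> threshold (fst s)
      \<and> fst (snd s) \<in> dominating (fst s) \<and> 0 < snd (snd s)"
    for n :: nat and s :: "('a \<Rightarrow> real) \<times> ('a \<Rightarrow> real) \<times> real"
  define Q where "Q n s t \<longleftrightarrow> (\<forall>j\<in>\<Omega>. fst s j \<le> fst t j) \<and> snd (snd t) \<le> snd (snd s) / 4
      \<and> (\<forall>w\<in>Lp. dp (fst (snd t)) w \<le> snd (snd t) \<longrightarrow> dp (fst (snd s)) w \<le> snd (snd s))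
      \<and> (\<forall>w\<in>dominating (fst t). dp (fst (snd t)) w \<le> snd (snd t) \<longrightarrow> w \<notin> A n)"
    for n s t
  have "P 0 (h, \<lambda>j. if j \<in> \<Omega> then h j else 0, 1)"
    using assms(1) restrict_mem_dominating unfolding P_def by simp
  then have "\<exists>s. P 0 s" ..
  moreover have "\<exists>t. P (Suc n) t \<and> Q n s t" if "P n s" for n s
  proof -
    obtain h' c r where s: "s = (h', c, r)" by (cases s) auto
    have "threshold h'" "c \<in> dominating h'" "0 < r" using that unfolding P_def s by simp_all
    from porous_nested_step[OF assms(2,3) porous_A this] obtain h'' c' r' where
      "threshold h''" "\<forall>j\<in>\<Omega>. h' j \<le> h'' j" "c' \<in> dominating h''" "0 < r'" "r' \<le> r / 4"
      "\<forall>w\<in>Lp. dp c' w \<le> r' \<longrightarrow> dp c w \<le> r" "\<forall>w\<in>dominating h''. dp c' w \<le> r' \<longrightarrow> w \<notin> A n" .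
    then have "P (Suc n) (h'', c', r') \<and> Q n s (h'', c', r')" unfolding P_def Q_def s by simp
    then show ?thesis ..
  qed
  ultimately have "\<exists>S. \<forall>n. P n (S n) \<and> Q n (S n) (S (Suc n))"
    by (rule dependent_nat_choice)
  then obtain S where S: "\<And>n. P n (S n) \<and> Q n (S n) (S (Suc n))" by blast
  obtain x where x: "\<And>n. x \<in> dominating (fst (S n))" "\<And>n. dp (fst (snd (S n))) x \<le> snd (snd (S n))"
    by (rule nested_balls_common_point[of "\<lambda>n. fst (snd (S n))" "\<lambda>n. fst (S n)" "\<lambda>n. snd (snd (S n))"])
      (use S in \<open>auto simp: P_def Q_def\<close>)
  have "x \<in> dominating h" using x(1)[of 0] S[of 0] unfolding P_def by simp
  then obtain n where "x \<in> A n" using cover by blast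
  moreover have "x \<notin> A n" using S[of n] x[of "Suc n"] unfolding Q_def by blast
  ultimately show False by contradiction
qed

end

theorem corollary2p5:
  fixes \<Omega> :: "'a set" and \<phi> :: "'a \<Rightarrow> real" and p :: real and g :: "'a \<Rightarrow> real"
  assumes "p \<ge> 1"
    and "\<forall>j\<in>\<Omega>. \<phi> j \<ge> 1"
    and "g \<in> lp_space \<Omega> \<phi> p"
  shows "\<not> (\<exists>lam. 0 < lam \<and> lam < 1 \<and>
            sigma_porous (lp_space \<Omega> \<phi> p) (lp_dist \<Omega> \<phi> p) lam
              {f \<in> lp_space \<Omega> \<phi> p. \<forall>j\<in>\<Omega>. \<bar>f j\<bar> \<ge> \<bar>g j\<bar>})"
proof -
  interpret weighted_lp \<Omega> \<phi> p using assms(1,2) by unfold_locales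
  have "threshold (\<lambda>j. \<bar>g j\<bar>)" using assms(3) unfolding threshold_def by (simp add: mem_Lp)
  then show ?thesis
    using dominating_not_sigma_porous unfolding dominating_def by blast
qed

end
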